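(* Let $M_1=(Q_1,R_1,X,\delta_1)$ and $M_2=(Q_2,R_2,X,\delta_2)$ be rough finite state machines with the same input set $X$. Then the restricted direct product $M_1\wedge M_2$ is covered by the full direct product $M_1\times M_2$, i.e. $M_1\wedge M_2\preceq M_1\times M_2$.
   Context: For a finite set $Q$ with an equivalence relation $R$ and $A\subseteq Q$, $\underline{A}$ is the union of the $R$-classes contained in $A$ and $\overline{A}$ is the union of the $R$-classes meeting $A$. A rough finite state machine (RFSM) is $M=(Q,R,X,\delta)$ with $Q$ a nonempty finite state set, $R$ an equivalence relation on $Q$, $X$ a nonempty finite input set, and $\delta$ assigning to each $(q,a)\in Q\times X$ a pair $\delta(q,a)=(\underline{\delta(q,a)},\overline{\delta(q,a)})=(\underline{A},\overline{A})$ for some $A\subseteq Q$. For equivalence relations $R_1,R_2$ on $Q_1,Q_2$, $R_1\times R_2$ is the equivalence relation on $Q_1\times Q_2$ with $((p_1,p_2),(q_1,q_2))\in R_1\times R_2$ iff $(p_1,q_1)\in R_1$ and $(p_2,q_2)\in R_2$. Full direct product: for RFSMs $M_i=(Q_i,R_i,X_i,\delta_i)$, $M_1\times M_2=(Q_1\times Q_2,R_1\times R_2,X_1\times X_2,\delta_1\times\delta_2)$ where the lower part of $(\delta_1\times\delta_2)((q_1,q_2),(x_1,x_2))$ is $\underline{\delta_1(q_1,x_1)}\times\underline{\delta_2(q_2,x_2)}$ and the upper part is $\overline{\delta_1(q_1,x_1)}\times\overline{\delta_2(q_2,x_2)}$. Restricted direct product (when $X_1=X_2=X$): $M_1\wedge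 M_2=(Q_1\times Q_2,R_1\times R_2,X,\delta_1\wedge\delta_2)$ with lower part $\underline{\delta_1(q_1,x)}\times\underline{\delta_2(q_2,x)}$ and upper part $\overline{\delta_1(q_1,x)}\times\overline{\delta_2(q_2,x)}$ of $(\delta_1\wedge\delta_2)((q_1,q_2),x)$. Covering: for RFSMs $N_1=(P_1,S_1,Y_1,\mu_1)$ and $N_2=(P_2,S_2,Y_2,\mu_2)$, a covering of $N_1$ by $N_2$ is a pair $(\eta,\xi)$ with $\eta:P_2\to P_1$ surjective and $\xi:Y_1\to Y_2$ a map (extended to words by $\xi(e)=e$, $\xi(y_1\cdots y_n)=\xi(y_1)\cdots\xi(y_n)$) such that (i) $(p,q)\in S_2\Rightarrow(\eta(p),\eta(q))\in S_1$ for all $p,q\in P_2$, and (ii) for all $p\in P_2$ and $y\in Y_1$: $\underline{\mu_1(\eta(p),y)}\subseteq\eta(\underline{\mu_2(p,\xi(y))})$ and $\overline{\mu_1(\eta(p),y)}\subseteq\eta(\overline{\mu_2(p,\xi(y))})$ (images of sets under $\eta$). One writes $N_1\preceq N_2$ if such a covering exists. *)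

theory Defs
  imports Main
begin

definition lower_appr :: "'q set \<Rightarrow> ('q \<times> 'q) set \<Rightarrow> 'q set \<Rightarrow> 'q set" where
  "lower_appr Q R A = \<Union>{C \<in> Q // R. C \<subseteq> A}"

definition upper_appr :: "'q set \<Rightarrow> ('q \<times> 'q) set \<Rightarrow> 'q set \<Rightarrow> 'q set" where
  "upper_appr Q R A = \<Union>{C \<in> Q // R. C \<inter> A \<noteq> {}}"

text \<open>A rough finite state machine (Q,R,X,delta); delta q a = (lower part, upper part).\<close>
record ('q, 'x) rfsm =
  st :: "'q set"
  rel :: "('q \<times> 'q) set"
  inp :: "'x set"
  trans :: "'q \<Rightarrow> 'x \<Rightarrow> 'q set \<times> 'q set"

definition is_rfsm :: "('q, 'x) rfsm \<Rightarrow> bool" where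
  "is_rfsm M \<longleftrightarrow>
     finite (st M) \<and> st M \<noteq> {} \<and> equiv (st M) (rel M) \<and>
     finite (inp M) \<and> inp M \<noteq> {} \<and>
     (\<forall>q\<in>st M. \<forall>a\<in>inp M. \<exists>A. A \<subseteq> st M \<and>
         trans M q a = (lower_appr (st M) (rel M) A, upper_appr (st M) (rel M) A))"

definition prod_rel :: "('a \<times> 'a) set \<Rightarrow> ('b \<times> 'b) set \<Rightarrow> (('a \<times> 'b) \<times> ('a \<times> 'b)) set" where
  "prod_rel R1 R2 = {((p1, p2), (q1, q2)). (p1, q1) \<in> R1 \<and> (p2, q2) \<in> R2}"

definition full_prod :: "('q1, 'x1) rfsm \<Rightarrow> ('q2, 'x2) rfsm \<Rightarrow> ('q1 \<times> 'q2, 'x1 \<times> 'x2) rfsm" where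
  "full_prod M1 M2 =
     \<lparr> st = st M1 \<times> st M2, rel = prod_rel (rel M1) (rel M2), inp = inp M1 \<times> inp M2,
       trans = (\<lambda>(q1, q2) (x1, x2).
          (fst (trans M1 q1 x1) \<times> fst (trans M2 q2 x2),
           snd (trans M1 q1 x1) \<times> snd (trans M2 q2 x2))) \<rparr>"

text \<open>Restricted direct product M1 /\ M2 (meaningful when inp M1 = inp M2).\<close>
definition restr_prod :: "('q1, 'x) rfsm \<Rightarrow> ('q2, 'x) rfsm \<Rightarrow> ('q1 \<times> 'q2, 'x) rfsm" where
  "restr_prod M1 M2 =
     \<lparr> st = st M1 \<times> st M2, rel = prod_rel (rel M1) (rel M2), inp = inp M1,
       trans = (\<lambda>(q1, q2) x.
          (fst (trans M1 q1 x) \<times> fst (trans M2 q2 x),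
           snd (trans M1 q1 x) \<times> snd (trans M2 q2 x))) \<rparr>"

definition is_covering :: "('p1, 'y1) rfsm \<Rightarrow> ('p2, 'y2) rfsm \<Rightarrow> ('p2 \<Rightarrow> 'p1) \<Rightarrow> ('y1 \<Rightarrow> 'y2) \<Rightarrow> bool" where
  "is_covering N1 N2 \<eta> \<xi> \<longleftrightarrow>
     \<eta> ` st N2 = st N1 \<and>
     (\<forall>y\<in>inp N1. \<xi> y \<in> inp N2) \<and>
     (\<forall>p\<in>st N2. \<forall>q\<in>st N2. (p, q) \<in> rel N2 \<longrightarrow> (\<eta> p, \<eta> q) \<in> rel N1) \<and>
     (\<forall>p\<in>st N2. \<forall>y\<in>inp N1.
        fst (trans N1 (\<eta> p) y) \<subseteq> \<eta> ` fst (trans N2 p (\<xi> y)) \<and>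
        snd (trans N1 (\<eta> p) y) \<subseteq> \<eta> ` snd (trans N2 p (\<xi> y)))"

definition covers :: "('p1, 'y1) rfsm \<Rightarrow> ('p2, 'y2) rfsm \<Rightarrow> bool" (infix "\<preceq>\<^sub>R" 50) where
  "N1 \<preceq>\<^sub>R N2 \<longleftrightarrow> (\<exists>\<eta> \<xi>. is_covering N1 N2 \<eta> \<xi>)"

end

theory Submission
  imports Defs
begin

lemma is_covering_restr_prod_full_prod:
  assumes "inp M1 = inp M2"
  shows "is_covering (restr_prod M1 M2) (full_prod M1 M2) id (\<lambda>x. (x, x))"
  using assms unfolding is_covering_def restr_prod_def full_prod_def by auto

theorem proposition3p1:
  fixes M1 :: "('q1, 'x) rfsm" and M2 :: "('q2, 'x) rfsm"
  assumes "is_rfsm M1" and "is_rfsm M2" and "inp M1 = inp M2"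
  shows "restr_prod M1 M2 \<preceq>\<^sub>R full_prod M1 M2"
  using is_covering_restr_prod_full_prod[OF assms(3)] unfolding covers_def by blast

end
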